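(* Suppose that $t$ is a canonical closed term of $\Psi$ and that $t\rightarrow u$ in $\Psi$. Then there is a natural number $n$ such that: (1) $\langle\!\langle t\rangle\!\rangle_\Psi\rightarrow_h\langle\!\langle u\rangle\!\rangle_\Psi$; (2) there is a canonical term $v$ with $u\rightarrow^n v$; (3) $\#_{\mathbf{app}}(w)=\#_{\mathbf{app}}(u)+m$ whenever $u\rightarrow^m w$ and $m\le n$; (4) $\langle\!\langle w\rangle\!\rangle_\Psi=\langle\!\langle u\rangle\!\rangle_\Psi$ whenever $u\rightarrow^m w$ and $m\le n$.
   Context: $\lambda$-terms: $M::=x\mid\lambda x.M\mid MN$, variables from a set $\Upsilon$ with a fixed total order, $FV(M)$ the ordered sequence of free variables. Weak call-by-name reduction: $(\lambda x.M)N\rightarrow_h M\{N/x\}$, closed under $M\rightarrow_h N\Rightarrow ML\rightarrow_h NL$. $\Psi$: binary function symbol $\mathbf{app}$, binary constructor $\mathbf{capp}$, constructors $c_{x,M}$ ($M$ a $\lambda$-term, $x\in\Upsilon$) of arity the length of $FV(\lambda x.M)$. Translations: $[\![x]\!]'=x$, $[\![\lambda x.M]\!]'=c_{x,M}(x_1,\dots,x_n)$ ($FV(\lambda x.M)=x_1,\dots,x_n$), $[\![MN]\!]'=\mathbf{capp}([\![M]\!]',[\![N]\!]')$; $[\![x]\!]_\Psi=x$, $[\![\lambda x.M]\!]_\Psi=c_{x,M}(x_1,\dots,x_n)$, $[\![MN]\!]_\Psi=\mathbf{app}([\![M]\!]_\Psi,[\![N]\!]')$. Rules (any $\lambda$-term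 $M$, any abstraction or application $N$, distinct variables $z,w$): $\mathbf{app}(c_{z,z},\mathbf{capp}(w,f))\rightarrow\mathbf{app}(w,f)$; $\mathbf{app}(c_{z,z},c_{x,M}(x_1,\dots,x_n))\rightarrow c_{x,M}(x_1,\dots,x_n)$; $\mathbf{app}(c_{z,w}(\mathbf{capp}(f,g)),h)\rightarrow\mathbf{app}(f,g)$; $\mathbf{app}(c_{z,w}(c_{x,M}(x_1,\dots,x_n)),h)\rightarrow c_{x,M}(x_1,\dots,x_n)$; $\mathbf{app}(c_{y,N}(y_1,\dots,y_m),y)\rightarrow[\![N]\!]_\Psi$ ($FV(\lambda y.N)=y_1,\dots,y_m$); $\mathbf{app}(\mathbf{capp}(x,y),z)\rightarrow\mathbf{app}(\mathbf{app}(x,y),z)$. Rewriting is call-by-value: a step replaces anywhere a subterm $l\sigma$ by $r\sigma$, $\sigma$ mapping variables to constructor terms (closed terms built only from constructors, i.e. from $\mathbf{capp}$ and the $c_{x,M}$). Back translation: $\langle\!\langle x\rangle\!\rangle_\Psi=x$, $\langle\!\langle\mathbf{app}(u,v)\rangle\!\rangle_\Psi=\langle\!\langle\mathbf{capp}(u,v)\rangle\!\rangle_\Psi=\langle\!\langle u\rangle\!\rangle_\Psi\langle\!\langle v\rangle\!\rangle_\Psi$, $\langle\!\langle c_{x,M}(t_1,\dots,t_n)\rangle\!\rangle_\Psi=(\lambda x.M)\{\langle\!\langle t_1\rangle\!\rangle_\Psi/x_1,\dots,\langle\!\langle t_n\rangle\!\rangle_\Psi/x_n\}$. A closed term $t$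 is canonical if either $t=c_{x,M}(t_1,\dots,t_n)$ is a constructor term, or $t=\mathbf{app}(u,v)$ with $u$ canonical and $v$ a constructor term. $\#_{\mathbf{app}}(t)$ is the number of occurrences of $\mathbf{app}$ in $t$. *)

theory Defs
  imports Main
begin

datatype lterm = Var nat | Lam nat lterm | App lterm lterm

fun fv :: "lterm \<Rightarrow> nat set" where
  "fv (Var x) = {x}"
| "fv (Lam x M) = fv M - {x}"
| "fv (App M N) = fv M \<union> fv N"

lemma finite_fv [simp]: "finite (fv M)"
  by (induction M) auto

definition FVs :: "lterm \<Rightarrow> nat list" where
  "FVs M = sorted_list_of_set (fv M)"

text \<open>It does not rename bound variables; it is
  capture-avoiding whenever the substituted terms are closed, which is the
  only situation arising in the statement (all terms involved are closed).\<close>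
fun lsubst :: "(nat \<times> lterm) list \<Rightarrow> lterm \<Rightarrow> lterm" where
  "lsubst s (Var x) = (case map_of s x of Some N \<Rightarrow> N | None \<Rightarrow> Var x)"
| "lsubst s (Lam y M) = Lam y (lsubst (filter (\<lambda>p. fst p \<noteq> y) s) M)"
| "lsubst s (App M N) = App (lsubst s M) (lsubst s N)"

inductive hred :: "lterm \<Rightarrow> lterm \<Rightarrow> bool" where
  beta: "hred (App (Lam x M) N) (lsubst [(x, N)] M)"
| appL: "hred M N \<Longrightarrow> hred (App M L) (App N L)"

datatype pterm =
    PVar nat
  | PApp pterm pterm          \<comment> \<open>function symbol app\<close>
  | PCapp pterm pterm         \<comment> \<open>constructor capp\<close>
  | PC nat lterm "pterm list"

fun psub :: "(nat \<Rightarrow> pterm) \<Rightarrow> pterm \<Rightarrow> pterm" where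
  "psub \<sigma> (PVar x) = \<sigma> x"
| "psub \<sigma> (PApp t u) = PApp (psub \<sigma> t) (psub \<sigma> u)"
| "psub \<sigma> (PCapp t u) = PCapp (psub \<sigma> t) (psub \<sigma> u)"
| "psub \<sigma> (PC x M ts) = PC x M (map (psub \<sigma>) ts)"

fun trans' :: "lterm \<Rightarrow> pterm" where
  "trans' (Var x) = PVar x"
| "trans' (Lam x M) = PC x M (map PVar (FVs (Lam x M)))"
| "trans' (App M N) = PCapp (trans' M) (trans' N)"

fun transPsi :: "lterm \<Rightarrow> pterm" where
  "transPsi (Var x) = PVar x"
| "transPsi (Lam x M) = PC x M (map PVar (FVs (Lam x M)))"
| "transPsi (App M N) = PApp (transPsi M) (trans' N)"

fun is_var :: "lterm \<Rightarrow> bool" where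
  "is_var (Var x) = True"
| "is_var _ = False"

inductive_set psi_rules :: "(pterm \<times> pterm) set" where
  r1: "(PApp (PC z (Var z) []) (PCapp (PVar w) (PVar f)), PApp (PVar w) (PVar f)) \<in> psi_rules"
| r2: "(PApp (PC z (Var z) []) (PC x M (map PVar (FVs (Lam x M)))),
        PC x M (map PVar (FVs (Lam x M)))) \<in> psi_rules"
| r3: "z \<noteq> w \<Longrightarrow> (PApp (PC z (Var w) [PCapp (PVar f) (PVar g)]) (PVar h),
        PApp (PVar f) (PVar g)) \<in> psi_rules"
| r4: "z \<noteq> w \<Longrightarrow> (PApp (PC z (Var w) [PC x M (map PVar (FVs (Lam x M)))]) (PVar h),
        PC x M (map PVar (FVs (Lam x M)))) \<in> psi_rules"
| r5: "\<not> is_var N \<Longrightarrow> (PApp (PC y N (map PVar (FVs (Lam y N)))) (PVar y), transPsi N) \<in> psi_rules"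
| r6: "(PApp (PCapp (PVar x) (PVar y)) (PVar z), PApp (PApp (PVar x) (PVar y)) (PVar z)) \<in> psi_rules"

inductive cterm :: "pterm \<Rightarrow> bool" where
  cC: "length ts = length (FVs (Lam x M)) \<Longrightarrow> (\<forall>t\<in>set ts. cterm t) \<Longrightarrow> cterm (PC x M ts)"
| cCapp: "cterm a \<Longrightarrow> cterm b \<Longrightarrow> cterm (PCapp a b)"

text \<open>Call-by-value rewriting: replace anywhere an instance l\<sigma> by r\<sigma>,
  \<sigma> mapping variables to constructor terms.\<close>
inductive step :: "pterm \<Rightarrow> pterm \<Rightarrow> bool" where
  root: "(l, r) \<in> psi_rules \<Longrightarrow> (\<forall>x. cterm (\<sigma> x)) \<Longrightarrow> step (psub \<sigma> l) (psub \<sigma> r)"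
| appL: "step t t' \<Longrightarrow> step (PApp t u) (PApp t' u)"
| appR: "step u u' \<Longrightarrow> step (PApp t u) (PApp t u')"
| cappL: "step t t' \<Longrightarrow> step (PCapp t u) (PCapp t' u)"
| cappR: "step u u' \<Longrightarrow> step (PCapp t u) (PCapp t u')"
| arg: "i < length ts \<Longrightarrow> step (ts ! i) s \<Longrightarrow> step (PC x M ts) (PC x M (ts[i := s]))"

fun bt :: "pterm \<Rightarrow> lterm" where
  "bt (PVar x) = Var x"
| "bt (PApp u v) = App (bt u) (bt v)"
| "bt (PCapp u v) = App (bt u) (bt v)"
| "bt (PC x M ts) = lsubst (zip (FVs (Lam x M)) (map bt ts)) (Lam x M)"

inductive canonical :: "pterm \<Rightarrow> bool" where
  canC: "cterm (PC x M ts) \<Longrightarrow> canonical (PC x M ts)"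
| canApp: "canonical u \<Longrightarrow> cterm v \<Longrightarrow> canonical (PApp u v)"

fun napp :: "pterm \<Rightarrow> nat" where
  "napp (PVar x) = 0"
| "napp (PApp u v) = Suc (napp u + napp v)"
| "napp (PCapp u v) = napp u + napp v"
| "napp (PC x M ts) = sum_list (map napp ts)"

end

theory Submission
  imports Defs
begin

text \<open>A canonical term is an application spine app(\<dots>app(c, v1)\<dots>, vk) of constructor
  terms, and constructor terms are normal, so a step of a canonical term is a root step at the
  innermost app. Rules r1--r5 then perform exactly one head \<beta>-step of the back translation,
  and leave a spine whose head constructor term may be a tower of capp's. Each such capp is
  unfolded by rule r6, which creates one app and does not change the back translation; once the
  tower is exhausted the term is canonical again.\<close>

lemma map_of_filter_fst_neq:
  "map_of (filter (\<lambda>p. fst p \<noteq> y) s) x = (if x = y then None else map_of s x)"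
  by (induction s) auto

lemma lsubst_cong: "\<forall>x \<in> fv M. map_of s1 x = map_of s2 x \<Longrightarrow> lsubst s1 M = lsubst s2 M"
  by (induction M arbitrary: s1 s2) (auto simp: map_of_filter_fst_neq)

lemma lsubst_trivial: "\<forall>x \<in> fv M. map_of s x = None \<Longrightarrow> lsubst s M = M"
  by (induction M arbitrary: s) (auto simp: map_of_filter_fst_neq)

lemma lsubst_closed: "fv M = {} \<Longrightarrow> lsubst s M = M"
  by (rule lsubst_trivial) simp

definition closed_subst :: "(nat \<times> lterm) list \<Rightarrow> bool" where
  "closed_subst s \<longleftrightarrow> (\<forall>N \<in> snd ` set s. fv N = {})"

lemma closed_subst_filter: "closed_subst s \<Longrightarrow> closed_subst (filter P s)"
  by (auto simp: closed_subst_def)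

lemma closed_subst_map_of: "closed_subst s \<Longrightarrow> map_of s x = Some N \<Longrightarrow> fv N = {}"
  by (force simp: closed_subst_def dest: map_of_SomeD)

lemma fv_lsubst: "closed_subst s \<Longrightarrow> fv (lsubst s M) = {x \<in> fv M. map_of s x = None}"
proof (induction M arbitrary: s)
  case (Var x)
  then show ?case by (cases "map_of s x") (auto dest: closed_subst_map_of)
next
  case (Lam y M)
  then show ?case by (auto simp: map_of_filter_fst_neq closed_subst_filter)
qed auto

lemma lsubst_lsubst: "closed_subst s1 \<Longrightarrow> lsubst s2 (lsubst s1 M) = lsubst (s1 @ s2) M"
proof (induction M arbitrary: s1 s2)
  case (Var x)
  then show ?case
    by (cases "map_of s1 x") (auto simp: map_add_def lsubst_closed dest: closed_subst_map_of)
next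
  case (Lam y M)
  then show ?case by (simp add: closed_subst_filter)
qed simp

lemma set_FVs [simp]: "set (FVs M) = fv M"
  by (simp add: FVs_def)

lemma bt_psub_trans':
  "\<forall>x \<in> fv N. map_of s x = Some (bt (\<sigma> x)) \<Longrightarrow> bt (psub \<sigma> (trans' N)) = lsubst s N"
proof (induction N arbitrary: s)
  case (Lam x M)
  have "bt (psub \<sigma> (trans' (Lam x M)))
      = lsubst (zip (FVs (Lam x M)) (map (\<lambda>v. bt (\<sigma> v)) (FVs (Lam x M)))) (Lam x M)"
    by (simp add: comp_def)
  also have "\<dots> = lsubst s (Lam x M)"
    using Lam.prems by (intro lsubst_cong) (simp add: map_of_zip_map del: fv.simps)
  finally show ?case .
qed auto

lemma bt_psub_transPsi: "bt (psub \<sigma> (transPsi N)) = bt (psub \<sigma> (trans' N))"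
  by (induction N) auto

lemma fv_bt_cterm: "cterm t \<Longrightarrow> fv (bt t) = {}"
proof (induction rule: cterm.induct)
  case (cC ts x M)
  let ?s = "zip (FVs (Lam x M)) (map bt ts)"
  have "closed_subst ?s"
    using cC.IH by (auto simp: closed_subst_def dest!: set_zip_rightD)
  then have "fv (bt (PC x M ts)) = {y \<in> set (FVs (Lam x M)). map_of ?s y = None}"
    by (simp only: bt.simps fv_lsubst set_FVs)
  also have "\<dots> = {}"
    using cC.hyps(1) by simp
  finally show ?case .
qed simp

lemma cterm_PApp_False: "cterm (PApp a b) \<Longrightarrow> False"
  by (cases rule: cterm.cases) auto

lemma napp_cterm: "cterm t \<Longrightarrow> napp t = 0"
  by (induction rule: cterm.induct) (auto simp: sum_list_eq_0_iff)

lemma cterm_psub_trans': "(\<And>x. cterm (\<sigma> x)) \<Longrightarrow> cterm (psub \<sigma> (trans' N))"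
  by (induction N) (auto intro!: cterm.intros)

lemma cterm_normal: "step t t' \<Longrightarrow> \<not> cterm t"
proof (induction rule: step.induct)
  case (root l r \<sigma>)
  then show ?case by (cases rule: psi_rules.cases) (auto dest: cterm_PApp_False)
qed (auto dest: cterm_PApp_False elim: cterm.cases)

text \<open>Like a canonical term, but the innermost app may have a capp-headed constructor term
  as its function part.\<close>

inductive precanonical :: "pterm \<Rightarrow> bool" where
  pre_head: "cterm c \<Longrightarrow> cterm v \<Longrightarrow> precanonical (PApp c v)"
| pre_C: "cterm (PC x M ts) \<Longrightarrow> precanonical (PC x M ts)"
| pre_PApp: "precanonical s \<Longrightarrow> cterm v \<Longrightarrow> precanonical (PApp s v)"

text \<open>The number of r6-steps still needed: the capp's on the left spine of the head.\<close>

fun capp_depth :: "pterm \<Rightarrow> nat" where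
  "capp_depth (PVar x) = 0"
| "capp_depth (PApp s v) = capp_depth s"
| "capp_depth (PCapp a b) = Suc (capp_depth a)"
| "capp_depth (PC x M ts) = 0"

lemma precanonical_PCapp_False: "precanonical (PCapp a b) \<Longrightarrow> False"
  by (cases rule: precanonical.cases) auto

lemma precanonical_psub_transPsi:
  "(\<And>x. cterm (\<sigma> x)) \<Longrightarrow> \<not> is_var N \<Longrightarrow> precanonical (psub \<sigma> (transPsi N))"
proof (induction N)
  case (App N1 N2)
  show ?case
  proof (cases "is_var N1")
    case True
    then show ?thesis
      using App.prems by (auto elim!: is_var.elims intro!: pre_head cterm_psub_trans')
  next
    case False
    then show ?thesis
      using App by (auto intro!: pre_PApp cterm_psub_trans')
  qed
qed (auto intro!: pre_C cterm.intros)

lemma precanonical_capp_depth_0: "precanonical u \<Longrightarrow> capp_depth u = 0 \<Longrightarrow> canonical u"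
proof (induction rule: precanonical.induct)
  case (pre_head c v)
  then show ?case by (cases rule: cterm.cases) (auto intro!: canonical.intros cterm.intros)
qed (auto intro: canonical.intros)

lemma hred_beta: "Q = lsubst [(x, N)] M \<Longrightarrow> hred (App (Lam x M) N) Q"
  by (simp add: hred.beta)

lemma bt_PC_const:
  "z \<noteq> w \<Longrightarrow> fv (bt C) = {} \<Longrightarrow> bt (PC z (Var w) [C]) = Lam z (bt C)"
  by (simp add: FVs_def)

lemma hred_bt_PC_const:
  assumes "z \<noteq> w" "cterm C"
  shows "hred (bt (PApp (PC z (Var w) [C]) h)) (bt C)"
proof -
  have "fv (bt C) = {}"
    using assms(2) by (rule fv_bt_cterm)
  with assms(1) have "bt (PApp (PC z (Var w) [C]) h) = App (Lam z (bt C)) (bt h)"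
    by (simp add: bt_PC_const del: bt.simps(4))
  with \<open>fv (bt C) = {}\<close> show ?thesis
    by (simp add: hred_beta lsubst_closed)
qed

lemma hred_bt_r5:
  assumes "\<And>x. cterm (\<sigma> x)"
  shows "hred (bt (psub \<sigma> (PApp (PC y N (map PVar (FVs (Lam y N)))) (PVar y))))
              (bt (psub \<sigma> (transPsi N)))"
proof -
  define S where "S = filter (\<lambda>p. fst p \<noteq> y)
                        (zip (FVs (Lam y N)) (map (\<lambda>v. bt (\<sigma> v)) (FVs (Lam y N))))"
  have lhs: "bt (psub \<sigma> (PApp (PC y N (map PVar (FVs (Lam y N)))) (PVar y)))
           = App (Lam y (lsubst S N)) (bt (\<sigma> y))"
    by (simp only: S_def psub.simps bt.simps lsubst.simps map_map comp_def)
  have "closed_subst S"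
    using assms fv_bt_cterm by (auto simp: S_def closed_subst_def dest!: set_zip_rightD)
  then have "lsubst [(y, bt (\<sigma> y))] (lsubst S N) = lsubst (S @ [(y, bt (\<sigma> y))]) N"
    by (rule lsubst_lsubst)
  also have "\<dots> = bt (psub \<sigma> (transPsi N))"
    unfolding bt_psub_transPsi
    by (rule bt_psub_trans'[symmetric])
       (auto simp: S_def map_of_filter_fst_neq map_add_def map_of_zip_map)
  finally show ?thesis
    unfolding lhs by (rule hred_beta[OF sym])
qed

lemma root_step_canonical:
  assumes "(l, r) \<in> psi_rules" "\<And>x. cterm (\<sigma> x)" "canonical (psub \<sigma> l)"
  shows "hred (bt (psub \<sigma> l)) (bt (psub \<sigma> r)) \<and> precanonical (psub \<sigma> r)"
  using assms(1)
proof (cases rule: psi_rules.cases)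
  case (r3 z w f g h)
  then show ?thesis
    using assms(2) hred_bt_PC_const[of z w "PCapp (\<sigma> f) (\<sigma> g)" "\<sigma> h"]
    by (auto intro!: pre_head cterm.intros)
next
  case (r4 z w x M h)
  let ?C = "psub \<sigma> (PC x M (map PVar (FVs (Lam x M))))"
  have "cterm ?C"
    using assms(2) by (auto intro!: cterm.intros)
  then show ?thesis
    using r4 hred_bt_PC_const[of z w ?C "\<sigma> h"] by (auto intro: pre_C)
next
  case (r5 N y)
  then show ?thesis
    using hred_bt_r5[OF assms(2)] precanonical_psub_transPsi[OF assms(2)] by simp
next
  case (r6 x y z)
  then show ?thesis
    using assms(3) by (auto elim: canonical.cases)
qed (use assms(2) in \<open>auto intro!: hred_beta pre_head pre_C cterm.intros\<close>)

lemma step_canonical: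
  "canonical t \<Longrightarrow> step t u \<Longrightarrow> hred (bt t) (bt u) \<and> precanonical u"
proof (induction t arbitrary: u rule: canonical.induct)
  case (canC x M ts)
  then show ?case using cterm_normal by blast
next
  case (canApp s v)
  from canApp.prems show ?case
  proof (cases rule: step.cases)
    case (root l r \<sigma>)
    then show ?thesis
      using root_step_canonical[of l r \<sigma>] canonical.canApp[OF canApp.hyps] by auto
  next
    case (appL s')
    then show ?thesis
      using canApp.IH[of s'] canApp.hyps by (auto intro: hred.appL pre_PApp)
  next
    case (appR v')
    then show ?thesis using cterm_normal canApp.hyps by blast
  qed
qed

lemma step_r6:
  assumes "cterm a" "cterm b" "cterm c"
  shows "step (PApp (PCapp a b) c) (PApp (PApp a b) c)"
proof -
  define \<sigma> where "\<sigma> = (\<lambda>n::nat. if n = 0 then a else if n = 1 then b else c)"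
  have "\<forall>x. cterm (\<sigma> x)"
    using assms by (simp add: \<sigma>_def)
  from step.root[OF psi_rules.r6[of 0 1 2] this] show ?thesis
    by (simp add: \<sigma>_def)
qed

lemma precanonical_capp_depth_Suc_step:
  "precanonical u \<Longrightarrow> capp_depth u = Suc k \<Longrightarrow> \<exists>w. step u w"
proof (induction rule: precanonical.induct)
  case (pre_head c v)
  then obtain a b where "c = PCapp a b" "cterm a" "cterm b"
    by (cases rule: cterm.cases) auto
  with pre_head.hyps(2) show ?case
    by (blast intro: step_r6)
next
  case (pre_PApp s v)
  then obtain s' where "step s s'"
    by auto
  then show ?case
    by (blast intro: step.appL)
qed simp

lemma precanonical_step:
  "precanonical u \<Longrightarrow> capp_depth u = Suc k \<Longrightarrow> step u w \<Longrightarrow>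
   precanonical w \<and> capp_depth w = k \<and> napp w = Suc (napp u) \<and> bt w = bt u"
proof (induction arbitrary: w rule: precanonical.induct)
  case (pre_head c v)
  then obtain a b where ab: "c = PCapp a b" "cterm a" "cterm b" "capp_depth a = k"
    by (cases rule: cterm.cases) auto
  from pre_head.prems(2) show ?case
  proof (cases rule: step.cases)
    case (root l r \<sigma>)
    from root(3) show ?thesis
      by (cases rule: psi_rules.cases)
         (use root ab pre_head.hyps in \<open>auto intro!: pre_PApp[OF precanonical.pre_head] simp: napp_cterm\<close>)
  qed (use ab pre_head.hyps cterm_normal cterm.cCapp in blast)+
next
  case (pre_PApp s v)
  from pre_PApp.prems(2) show ?case
  proof (cases rule: step.cases)
    case (root l r \<sigma>)
    from root(3) show ?thesis
      by (cases rule: psi_rules.cases)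
         (use root pre_PApp in \<open>auto dest: precanonical_PCapp_False\<close>)
  qed (use pre_PApp cterm_normal in \<open>auto intro: precanonical.pre_PApp\<close>)
qed simp

lemma precanonical_relpowp:
  "precanonical u \<Longrightarrow> m \<le> capp_depth u \<Longrightarrow> (step ^^ m) u w \<Longrightarrow>
   precanonical w \<and> capp_depth w = capp_depth u - m \<and> napp w = napp u + m \<and> bt w = bt u"
proof (induction m arbitrary: w)
  case (Suc m)
  from Suc.prems(3) obtain y where y: "(step ^^ m) u y" "step y w"
    by (rule relpowp_Suc_E)
  with Suc have "precanonical y \<and> capp_depth y = Suc (capp_depth u - Suc m)
                 \<and> napp y = napp u + m \<and> bt y = bt u"
    by simp
  with precanonical_step[of y "capp_depth u - Suc m" w] y(2) show ?case
    by simp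
qed simp

lemma precanonical_reaches_canonical:
  "precanonical u \<Longrightarrow> \<exists>v. canonical v \<and> (step ^^ capp_depth u) u v"
proof (induction "capp_depth u" arbitrary: u)
  case 0
  then show ?case using precanonical_capp_depth_0 by fastforce
next
  case (Suc k)
  obtain w where w: "step u w"
    using precanonical_capp_depth_Suc_step Suc.prems Suc.hyps(2) by metis
  with Suc.prems Suc.hyps(2) precanonical_step have "precanonical w" "capp_depth w = k"
    by metis+
  with Suc.hyps(1) obtain v where "canonical v" "(step ^^ k) w v"
    by metis
  with w Suc.hyps(2) show ?case
    by (metis relpowp_Suc_I2)
qed

theorem lemma15:
  assumes "canonical t" and "step t u"
  shows "\<exists>n::nat.
           hred (bt t) (bt u)
         \<and> (\<exists>v. canonical v \<and> (step ^^ n) u v)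
         \<and> (\<forall>m w. (step ^^ m) u w \<and> m \<le> n \<longrightarrow> napp w = napp u + m)
         \<and> (\<forall>m w. (step ^^ m) u w \<and> m \<le> n \<longrightarrow> bt w = bt u)"
proof -
  from step_canonical[OF assms] have "hred (bt t) (bt u)" and pre: "precanonical u"
    by auto
  moreover obtain v where "canonical v" "(step ^^ capp_depth u) u v"
    using precanonical_reaches_canonical[OF pre] by blast
  moreover have "napp w = napp u + m \<and> bt w = bt u"
    if "(step ^^ m) u w" "m \<le> capp_depth u" for m w
    using precanonical_relpowp[OF pre that(2,1)] by simp
  ultimately show ?thesis
    by (intro exI[of _ "capp_depth u"] conjI allI impI) auto
qed

end
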